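(* Let $F_0$ be a weighted QF-NIA formula consisting of a set $H_0$ of hard clauses and a set $S_0=\{[D_1,\Omega_1],\dots,[D_m,\Omega_m]\}$ of soft clauses with positive natural-number weights. Consider the following procedure $\mathrm{SolveMaxSMT}(F_0)$. Initialization. Choose artificial bounds $B$ sufficient to linearize $F_0$. Linearize to obtain linear hard clauses $H$ and linear soft clauses $S$ (see context). Set $\mathit{bsf}:=\mathrm{undef}$ and $\mathit{msc}:=\infty$. Loop. Repeat until a time limit is exceeded. Call a threshold Max-SMT(QF-LIA) oracle on $(H,S,B,\mathit{msc})$. This oracle returns $\mathrm{Unsat}$ if there is no integer model $\alpha$ of $H$ with $\mathrm{cost}_S(\alpha)\le\mathit{msc}$. Otherwise it returns a model $M$ of $H$ with $\mathrm{cost}_S(M)\le\mathit{msc}$ minimizing the pair $(\mathrm{cost}_B(M),\mathrm{cost}_S(M))$ lexicographically among all such models. Act on the result as follows. - If the oracle returns $\mathrm{Unsat}$: return $\langle\mathrm{Unsat},\mathrm{undef}\rangle$ if $\mathit{bsf}=\mathrm{undef}$, and $\langle\mathrm{Sat},\mathit{bsf}\rangle$ otherwise. - Else, if $\mathrm{cost}_B(M)=0$: set $\mathit{bsf}:=M$ and $\mathit{msc}:=\mathrm{cost}_S(M)-1$. - Else: choose a nonempty set of bounds of $B$ violated by $M$. Replace each such $V\ge L$ by $V\ge M(V)$ and each such $V\le U$ by $V\le M(V)$. Add to $H$ the case-splitting clauses $V=K\rightarrow v_Q=Q[V:=K]$ for every value $K$ newly included in the domain of $V$ and every monomial $Q$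 linearized using $V$. Timeout. If the time limit is exceeded, return $\langle\mathrm{Unknown},\mathrm{undef}\rangle$. Then: (i) if $\mathrm{SolveMaxSMT}(F_0)$ returns $\langle\mathrm{Sat},M\rangle$, then $H_0$ is satisfiable and $M$ (restricted to the variables of $F_0$) is a model of $H_0$ that minimizes the sum of the weights of the clauses of $S_0$ it falsifies, among all integer models of $H_0$; (ii) if $\mathrm{SolveMaxSMT}(F_0)$ returns $\langle\mathrm{Unsat},\mathrm{undef}\rangle$, then $H_0$ is unsatisfiable over the integers.
   Context: QF-NIA clauses are disjunctions of polynomial inequalities with integer coefficients over integer-valued variables. Artificial bounds are a finite set $B$ of constraints $V\ge L$ or $V\le U$ ($L,U\in\mathbb{Z}$). Linearization. While some non-linear monomial $Q$ occurs, pick a variable $V$ of $Q$ having both a lower bound $l$ and an upper bound $u$ (from $F_0$ or $B$). Introduce a fresh integer variable $v_Q$ and replace every occurrence of $Q$ by $v_Q$. Add, for each integer $K$ with $l\le K\le u$, the case-splitting clause $V=K\rightarrow v_Q=Q[V:=K]$, where $Q[V:=K]$ is $Q$ with $V$ evaluated at $K$. New non-linear monomials are processed in the same way. Linear clauses. $H$ consists of the clauses of $H_0$ with monomials replaced by their fresh variables, together with all case-splitting clauses. $S$ consists of the soft clauses $[D_i',\Omega_i]$, where $D_i'$ is $D_i$ with monomials replaced. Costs. For an assignment $\alpha$, the bound cost $\mathrm{cost}_B(\alpha)$ is the number of bounds of $B$ (each treated as a soft clause of weight $1$) that $\alpha$ violates. The soft cost $\mathrm{cost}_S(\alpha)$ is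 $\sum\{\Omega : [D,\Omega]\in S,\ \alpha\not\models D\}$. *)

theory Defs
  imports Main "HOL-Library.Multiset"
begin

text \<open>A monomial over variables of type 'x is a multiset of variables
 (the empty multiset is the constant monomial 1).  A polynomial with integer
 coefficients is a list of (coefficient, monomial) pairs, read as their sum.\<close>

type_synonym 'x mon = "'x multiset"
type_synonym 'x poly = "(int \<times> 'x mon) list"

datatype rel = RLe | RLt | REq | RNe | RGe | RGt

text \<open>A literal \<open>Lit r p\<close> is the polynomial constraint \<open>p r 0\<close>;
 a clause is the disjunction of its literals.\<close>
datatype 'x lit = Lit rel "'x poly"
type_synonym 'x clause = "'x lit list"

definition eval_mon :: "('x \<Rightarrow> int) \<Rightarrow> 'x mon \<Rightarrow> int" where
  "eval_mon \<alpha> Q = prod_mset (image_mset \<alpha> Q)"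

definition eval_poly :: "('x \<Rightarrow> int) \<Rightarrow> 'x poly \<Rightarrow> int" where
  "eval_poly \<alpha> p = (\<Sum>(c, Q)\<leftarrow>p. c * eval_mon \<alpha> Q)"

fun holds_rel :: "rel \<Rightarrow> int \<Rightarrow> bool" where
  "holds_rel RLe x = (x \<le> 0)"
| "holds_rel RLt x = (x < 0)"
| "holds_rel REq x = (x = 0)"
| "holds_rel RNe x = (x \<noteq> 0)"
| "holds_rel RGe x = (x \<ge> 0)"
| "holds_rel RGt x = (x > 0)"

fun sat_lit :: "('x \<Rightarrow> int) \<Rightarrow> 'x lit \<Rightarrow> bool" where
  "sat_lit \<alpha> (Lit r p) = holds_rel r (eval_poly \<alpha> p)"

definition sat_clause :: "('x \<Rightarrow> int) \<Rightarrow> 'x clause \<Rightarrow> bool" where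
  "sat_clause \<alpha> D = (\<exists>l\<in>set D. sat_lit \<alpha> l)"

definition sat_cnf :: "('x \<Rightarrow> int) \<Rightarrow> 'x clause set \<Rightarrow> bool" where
  "sat_cnf \<alpha> H = (\<forall>D\<in>H. sat_clause \<alpha> D)"

definition soft_cost :: "('x clause \<times> nat) list \<Rightarrow> ('x \<Rightarrow> int) \<Rightarrow> nat" where
  "soft_cost S \<alpha> = (\<Sum>(D, w)\<leftarrow>S. if sat_clause \<alpha> D then 0 else w)"

datatype 'v bound = Lower 'v int | Upper 'v int

fun sat_bound :: "('v \<Rightarrow> int) \<Rightarrow> 'v bound \<Rightarrow> bool" where
  "sat_bound \<alpha> (Lower V L) = (L \<le> \<alpha> V)"
| "sat_bound \<alpha> (Upper V U) = (\<alpha> V \<le> U)"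

definition bound_cost :: "'v bound set \<Rightarrow> ('v \<Rightarrow> int) \<Rightarrow> nat" where
  "bound_cost B \<alpha> = card {b \<in> B. \<not> sat_bound \<alpha> b}"

fun bound_clause :: "'v bound \<Rightarrow> 'v clause" where
  "bound_clause (Lower V L) = [Lit RGe [(1, {#V#}), (- L, {#})]]"
| "bound_clause (Upper V U) = [Lit RLe [(1, {#V#}), (- U, {#})]]"

definition formula_bounds :: "'v clause set \<Rightarrow> 'v bound set" where
  "formula_bounds H0 = {b. bound_clause b \<in> H0}"

definition all_bounds :: "'v clause set \<Rightarrow> 'v bound set \<Rightarrow> 'v bound set" where
  "all_bounds H0 B = formula_bounds H0 \<union> B"

definition dom_var :: "'v clause set \<Rightarrow> 'v bound set \<Rightarrow> 'v \<Rightarrow> int set" where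
  "dom_var H0 B V = {K. (\<forall>L. Lower V L \<in> all_bounds H0 B \<longrightarrow> L \<le> K) \<and>
                         (\<forall>U. Upper V U \<in> all_bounds H0 B \<longrightarrow> K \<le> U)}"

text \<open>Variables of the linear problem: original variables and fresh variables
 \<open>v_Q\<close> for non-linear monomials Q.\<close>
datatype 'v lvar = OVar 'v | MVar "'v mon"

definition nonlinear :: "'v mon \<Rightarrow> bool" where
  "nonlinear Q \<longleftrightarrow> size Q \<ge> 2"

definition clause_mons :: "'v clause \<Rightarrow> 'v mon set" where
  "clause_mons D = (\<Union>l\<in>set D. case l of Lit r p \<Rightarrow> snd ` set p)"

definition formula_mons :: "'v clause set \<Rightarrow> ('v clause \<times> nat) list \<Rightarrow> 'v mon set" where
  "formula_mons H0 S0 = (\<Union>D\<in>H0. clause_mons D) \<union> (\<Union>(D, w)\<in>set S0. clause_mons D)"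

text \<open>Q[V:=K] = K^(count Q V) * rest_mon V Q.\<close>
definition rest_mon :: "'v \<Rightarrow> 'v mon \<Rightarrow> 'v mon" where
  "rest_mon V Q = filter_mset (\<lambda>x. x \<noteq> V) Q"

text \<open>The non-linear monomials processed by linearization, where \<open>sel Q\<close> is the
 variable of Q chosen for the case split; new non-linear monomials arising as
 \<open>Q[V:=K]\<close> are processed in the same way.\<close>
inductive_set lin_mons :: "'v clause set \<Rightarrow> ('v clause \<times> nat) list \<Rightarrow> ('v mon \<Rightarrow> 'v) \<Rightarrow> 'v mon set"
  for H0 S0 sel where
  init: "Q \<in> formula_mons H0 S0 \<Longrightarrow> nonlinear Q \<Longrightarrow> Q \<in> lin_mons H0 S0 sel"
| rest: "Q \<in> lin_mons H0 S0 sel \<Longrightarrow> nonlinear (rest_mon (sel Q) Q) \<Longrightarrow>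
         rest_mon (sel Q) Q \<in> lin_mons H0 S0 sel"

definition sufficient :: "'v clause set \<Rightarrow> ('v clause \<times> nat) list \<Rightarrow> 'v bound set \<Rightarrow> ('v mon \<Rightarrow> 'v) \<Rightarrow> bool" where
  "sufficient H0 S0 B sel \<longleftrightarrow>
     (\<forall>Q\<in>lin_mons H0 S0 sel. sel Q \<in># Q \<and>
        (\<exists>L. Lower (sel Q) L \<in> all_bounds H0 B) \<and> (\<exists>U. Upper (sel Q) U \<in> all_bounds H0 B))"

definition lin_mon :: "'v mon \<Rightarrow> 'v lvar mon" where
  "lin_mon Q = (if nonlinear Q then {#MVar Q#} else image_mset OVar Q)"

definition lin_poly :: "'v poly \<Rightarrow> 'v lvar poly" where
  "lin_poly p = map (\<lambda>(c, Q). (c, lin_mon Q)) p"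

fun lin_lit :: "'v lit \<Rightarrow> 'v lvar lit" where
  "lin_lit (Lit r p) = Lit r (lin_poly p)"

definition lin_clause :: "'v clause \<Rightarrow> 'v lvar clause" where
  "lin_clause D = map lin_lit D"

text \<open>Case-splitting clause  V = K \<longrightarrow> v_Q = Q[V:=K],  i.e.
 (V - K \<noteq> 0) \<or> (v_Q - K^e * rest = 0), with V = sel Q.\<close>
definition split_clause :: "('v mon \<Rightarrow> 'v) \<Rightarrow> 'v mon \<Rightarrow> int \<Rightarrow> 'v lvar clause" where
  "split_clause sel Q K =
     [Lit RNe [(1, {#OVar (sel Q)#}), (- K, {#})],
      Lit REq [(1, {#MVar Q#}), (- (K ^ count Q (sel Q)), lin_mon (rest_mon (sel Q) Q))]]"

text \<open>Linear hard clauses H for the current bounds B: the linearized clauses of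
 H0 plus the case splits for every value in the current domain of the chosen
 variable (the domains only grow, so this is the union of all case-splitting
 clauses added so far).\<close>
definition lin_hard :: "'v clause set \<Rightarrow> ('v clause \<times> nat) list \<Rightarrow> ('v mon \<Rightarrow> 'v) \<Rightarrow> 'v bound set \<Rightarrow> 'v lvar clause set" where
  "lin_hard H0 S0 sel B =
     lin_clause ` H0 \<union>
     {split_clause sel Q K | Q K. Q \<in> lin_mons H0 S0 sel \<and> K \<in> dom_var H0 B (sel Q)}"

definition lin_soft :: "('v clause \<times> nat) list \<Rightarrow> ('v lvar clause \<times> nat) list" where
  "lin_soft S0 = map (\<lambda>(D, w). (lin_clause D, w)) S0"

text \<open>msc is an integer or \<infinity> (None).\<close>
definition within :: "nat \<Rightarrow> int option \<Rightarrow> bool" where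
  "within c msc = (case msc of None \<Rightarrow> True | Some k \<Rightarrow> int c \<le> k)"

definition oracle_unsat :: "'x clause set \<Rightarrow> ('x clause \<times> nat) list \<Rightarrow> int option \<Rightarrow> bool" where
  "oracle_unsat H S msc \<longleftrightarrow> \<not> (\<exists>\<alpha>. sat_cnf \<alpha> H \<and> within (soft_cost S \<alpha>) msc)"

definition lbound_cost :: "'v bound set \<Rightarrow> ('v lvar \<Rightarrow> int) \<Rightarrow> nat" where
  "lbound_cost B M = bound_cost B (M \<circ> OVar)"

definition oracle_model :: "'v lvar clause set \<Rightarrow> ('v lvar clause \<times> nat) list \<Rightarrow> 'v bound set
     \<Rightarrow> int option \<Rightarrow> ('v lvar \<Rightarrow> int) \<Rightarrow> bool" where
  "oracle_model H S B msc M \<longleftrightarrow>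
     sat_cnf M H \<and> within (soft_cost S M) msc \<and>
     (\<forall>\<alpha>. sat_cnf \<alpha> H \<and> within (soft_cost S \<alpha>) msc \<longrightarrow>
        lbound_cost B M < lbound_cost B \<alpha> \<or>
        (lbound_cost B M = lbound_cost B \<alpha> \<and> soft_cost S M \<le> soft_cost S \<alpha>))"

fun relax :: "('v lvar \<Rightarrow> int) \<Rightarrow> 'v bound \<Rightarrow> 'v bound" where
  "relax M (Lower V L) = Lower V (M (OVar V))"
| "relax M (Upper V U) = Upper V (M (OVar V))"

datatype 'a result = RSat 'a | RUnsat | RUnknown

text \<open>\<open>solve_run H0 S0 sel B bsf msc r\<close>: the loop, started in the state
 (B, bsf, msc) (H being determined by B), can terminate with result r.
 All nondeterministic choices (oracle model, violated bounds to relax, time limit)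
 are quantified over.\<close>
inductive solve_run :: "'v clause set \<Rightarrow> ('v clause \<times> nat) list \<Rightarrow> ('v mon \<Rightarrow> 'v) \<Rightarrow>
    'v bound set \<Rightarrow> ('v lvar \<Rightarrow> int) option \<Rightarrow> int option \<Rightarrow> ('v lvar \<Rightarrow> int) result \<Rightarrow> bool"
  for H0 S0 sel where
  timeout: "solve_run H0 S0 sel B bsf msc RUnknown"
| unsat_none: "oracle_unsat (lin_hard H0 S0 sel B) (lin_soft S0) msc \<Longrightarrow>
     solve_run H0 S0 sel B None msc RUnsat"
| unsat_some: "oracle_unsat (lin_hard H0 S0 sel B) (lin_soft S0) msc \<Longrightarrow>
     solve_run H0 S0 sel B (Some M) msc (RSat M)"
| improve: "oracle_model (lin_hard H0 S0 sel B) (lin_soft S0) B msc M \<Longrightarrow>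
     lbound_cost B M = 0 \<Longrightarrow>
     solve_run H0 S0 sel B (Some M) (Some (int (soft_cost (lin_soft S0) M) - 1)) r \<Longrightarrow>
     solve_run H0 S0 sel B bsf msc r"
| relax_bounds: "oracle_model (lin_hard H0 S0 sel B) (lin_soft S0) B msc M \<Longrightarrow>
     lbound_cost B M \<noteq> 0 \<Longrightarrow>
     W \<subseteq> {b \<in> B. \<not> sat_bound (M \<circ> OVar) b} \<Longrightarrow> W \<noteq> {} \<Longrightarrow>
     solve_run H0 S0 sel ((B - W) \<union> relax M ` W) bsf msc r \<Longrightarrow>
     solve_run H0 S0 sel B bsf msc r"

definition solve_maxsmt :: "'v clause set \<Rightarrow> ('v clause \<times> nat) list \<Rightarrow> ('v lvar \<Rightarrow> int) result \<Rightarrow> bool" where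
  "solve_maxsmt H0 S0 r \<longleftrightarrow>
     (\<exists>B sel. finite B \<and> sufficient H0 S0 B sel \<and> solve_run H0 S0 sel B None None r)"

end

theory Submission
  imports Defs
begin

text \<open>Every integer model \<open>\<alpha>\<close> of \<open>H0\<close> extends, by interpreting each fresh variable
 \<open>v_Q\<close> as the value of \<open>Q\<close> under \<open>\<alpha>\<close>, to a model of the linear clauses \<open>H\<close> with the
 same soft cost, whatever the current bounds are.  Conversely, if a model \<open>M\<close> of \<open>H\<close>
 respects all bounds, then every case-splitting variable lies in its current domain,
 so the case-splitting clause for its actual value fires and, by induction on the
 size of \<open>Q\<close>, forces \<open>M(v_Q) = Q(M)\<close>; hence \<open>M\<close> restricted to the original
 variables is a model of \<open>H0\<close> with the same soft cost.  So \<open>bsf\<close> is always a model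
 of \<open>H0\<close> of cost \<open>msc + 1\<close>, and an Unsat answer of the oracle means that no model
 of \<open>H0\<close> costs at most \<open>msc\<close>: with \<open>msc = \<infinity>\<close> that \<open>H0\<close> is unsatisfiable,
 otherwise that \<open>bsf\<close> is optimal.\<close>

lemma eval_mon_empty [simp]: "eval_mon \<alpha> {#} = 1"
  and eval_mon_singleton [simp]: "eval_mon \<alpha> {#x#} = \<alpha> x"
  by (simp_all add: eval_mon_def)

lemma eval_mon_rest_mon:
  "eval_mon \<alpha> Q = \<alpha> V ^ count Q V * eval_mon \<alpha> (rest_mon V Q)"
proof -
  have "Q = {#x \<in># Q. x = V#} + rest_mon V Q"
    unfolding rest_mon_def by (rule multiset_partition)
  then have "eval_mon \<alpha> Q = eval_mon \<alpha> {#x \<in># Q. x = V#} * eval_mon \<alpha> (rest_mon V Q)"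
    unfolding eval_mon_def by (metis image_mset_union prod_mset.union)
  then show ?thesis
    by (simp add: filter_eq_replicate_mset eval_mon_def)
qed

lemma size_rest_mon_less:
  assumes "V \<in># Q"
  shows "size (rest_mon V Q) < size Q"
proof -
  have "Q = {#x \<in># Q. x = V#} + rest_mon V Q"
    unfolding rest_mon_def by (rule multiset_partition)
  then have "size Q = count Q V + size (rest_mon V Q)"
    by (metis size_union size_replicate_mset filter_eq_replicate_mset)
  with assms show ?thesis by simp
qed

lemma eval_lin_mon_linear:
  "\<not> nonlinear Q \<Longrightarrow> eval_mon \<beta> (lin_mon Q) = eval_mon (\<beta> \<circ> OVar) Q"
  by (simp add: lin_mon_def eval_mon_def multiset.map_comp)

lemma sat_lin_clause_iff:
  assumes "\<forall>Q\<in>clause_mons D. eval_mon \<beta> (lin_mon Q) = eval_mon \<alpha> Q"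
  shows "sat_clause \<beta> (lin_clause D) \<longleftrightarrow> sat_clause \<alpha> D"
proof -
  have "sat_lit \<beta> (lin_lit l) \<longleftrightarrow> sat_lit \<alpha> l" if "l \<in> set D" for l
  proof (cases l)
    case (Lit r p)
    with that assms have "\<forall>Q\<in>snd ` set p. eval_mon \<beta> (lin_mon Q) = eval_mon \<alpha> Q"
      by (force simp: clause_mons_def)
    then have "eval_poly \<beta> (lin_poly p) = eval_poly \<alpha> p"
      by (induction p) (auto simp: eval_poly_def lin_poly_def)
    with Lit show ?thesis by simp
  qed
  then show ?thesis
    by (auto simp: sat_clause_def lin_clause_def)
qed

lemma soft_cost_lin_soft_eq:
  assumes "\<forall>(D, w)\<in>set S. \<forall>Q\<in>clause_mons D. eval_mon \<beta> (lin_mon Q) = eval_mon \<alpha> Q"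
  shows "soft_cost (lin_soft S) \<beta> = soft_cost S \<alpha>"
  using assms
  by (induction S) (auto simp: soft_cost_def lin_soft_def dest: sat_lin_clause_iff)

fun lin_ext :: "('v \<Rightarrow> int) \<Rightarrow> 'v lvar \<Rightarrow> int" where
  "lin_ext \<alpha> (OVar v) = \<alpha> v"
| "lin_ext \<alpha> (MVar Q) = eval_mon \<alpha> Q"

lemma lin_ext_comp_OVar [simp]: "lin_ext \<alpha> \<circ> OVar = \<alpha>"
  by auto

lemma eval_lin_mon_lin_ext [simp]: "eval_mon (lin_ext \<alpha>) (lin_mon Q) = eval_mon \<alpha> Q"
proof (cases "nonlinear Q")
  case False
  then show ?thesis by (simp add: eval_lin_mon_linear)
qed (simp add: lin_mon_def)

lemma sat_split_clause_lin_ext: "sat_clause (lin_ext \<alpha>) (split_clause sel Q K)"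
proof (cases "\<alpha> (sel Q) = K")
  case True
  then have "eval_mon \<alpha> Q = K ^ count Q (sel Q) * eval_mon (lin_ext \<alpha>) (lin_mon (rest_mon (sel Q) Q))"
    using eval_mon_rest_mon[of \<alpha> Q "sel Q"] by simp
  then show ?thesis
    by (simp add: split_clause_def sat_clause_def eval_poly_def)
qed (simp add: split_clause_def sat_clause_def eval_poly_def)

lemma sat_cnf_lin_hard_lin_ext:
  assumes "sat_cnf \<alpha> H0"
  shows "sat_cnf (lin_ext \<alpha>) (lin_hard H0 S0 sel B)"
  using assms sat_lin_clause_iff[of _ "lin_ext \<alpha>" \<alpha>] sat_split_clause_lin_ext
  by (auto simp: sat_cnf_def lin_hard_def)

lemma soft_cost_lin_soft_lin_ext: "soft_cost (lin_soft S) (lin_ext \<alpha>) = soft_cost S \<alpha>"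
  by (rule soft_cost_lin_soft_eq) simp

lemma model_in_dom_var:
  assumes hard: "sat_cnf M (lin_hard H0 S0 sel B)"
    and bounds: "\<forall>b\<in>B. sat_bound (M \<circ> OVar) b"
  shows "M (OVar V) \<in> dom_var H0 B V"
proof -
  have "sat_bound (M \<circ> OVar) b" if "b \<in> formula_bounds H0" for b
  proof -
    from that hard have "sat_clause M (lin_clause (bound_clause b))"
      by (auto simp: sat_cnf_def lin_hard_def formula_bounds_def)
    then show ?thesis
      by (cases b) (auto simp: lin_clause_def sat_clause_def lin_poly_def lin_mon_def
          nonlinear_def eval_poly_def eval_mon_def)
  qed
  with bounds have "sat_bound (M \<circ> OVar) b" if "b \<in> all_bounds H0 B" for b
    using that by (auto simp: all_bounds_def)
  from this[of "Lower V _"] this[of "Upper V _"] show ?thesis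
    by (auto simp: dom_var_def)
qed

lemma model_MVar_eq_eval_mon:
  assumes sel: "\<forall>Q\<in>lin_mons H0 S0 sel. sel Q \<in># Q"
    and hard: "sat_cnf M (lin_hard H0 S0 sel B)"
    and bounds: "\<forall>b\<in>B. sat_bound (M \<circ> OVar) b"
    and "Q \<in> lin_mons H0 S0 sel"
  shows "M (MVar Q) = eval_mon (M \<circ> OVar) Q"
  using \<open>Q \<in> lin_mons H0 S0 sel\<close>
proof (induction "size Q" arbitrary: Q rule: less_induct)
  case less
  define V where "V = sel Q"
  define R where "R = rest_mon V Q"
  have "split_clause sel Q (M (OVar V)) \<in> lin_hard H0 S0 sel B"
    using less.prems model_in_dom_var[OF hard bounds] by (auto simp: lin_hard_def V_def)
  with hard have "sat_clause M (split_clause sel Q (M (OVar V)))"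
    by (auto simp: sat_cnf_def)
  then have split: "M (MVar Q) = M (OVar V) ^ count Q V * eval_mon M (lin_mon R)"
    by (simp add: split_clause_def sat_clause_def eval_poly_def V_def R_def)
  have "eval_mon M (lin_mon R) = eval_mon (M \<circ> OVar) R"
  proof (cases "nonlinear R")
    case True
    with less.prems have "R \<in> lin_mons H0 S0 sel"
      by (simp add: R_def V_def lin_mons.rest)
    moreover have "size R < size Q"
      using sel less.prems by (simp add: R_def V_def size_rest_mon_less)
    ultimately show ?thesis
      using less.hyps True by (simp add: lin_mon_def)
  qed (rule eval_lin_mon_linear)
  with split show ?case
    using eval_mon_rest_mon[of "M \<circ> OVar" Q V] by (simp add: R_def)
qed

lemma eval_lin_formula_mon_model:
  assumes sel: "\<forall>Q\<in>lin_mons H0 S0 sel. sel Q \<in># Q"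
    and hard: "sat_cnf M (lin_hard H0 S0 sel B)"
    and bounds: "\<forall>b\<in>B. sat_bound (M \<circ> OVar) b"
    and "Q \<in> formula_mons H0 S0"
  shows "eval_mon M (lin_mon Q) = eval_mon (M \<circ> OVar) Q"
proof (cases "nonlinear Q")
  case True
  with \<open>Q \<in> formula_mons H0 S0\<close> have "Q \<in> lin_mons H0 S0 sel"
    by (rule lin_mons.init)
  with True show ?thesis
    using model_MVar_eq_eval_mon[OF sel hard bounds] by (simp add: lin_mon_def)
qed (rule eval_lin_mon_linear)

lemma sat_cnf_comp_OVar_model:
  assumes sel: "\<forall>Q\<in>lin_mons H0 S0 sel. sel Q \<in># Q"
    and hard: "sat_cnf M (lin_hard H0 S0 sel B)"
    and bounds: "\<forall>b\<in>B. sat_bound (M \<circ> OVar) b"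
  shows "sat_cnf (M \<circ> OVar) H0"
  unfolding sat_cnf_def
proof
  fix D assume "D \<in> H0"
  with hard have "sat_clause M (lin_clause D)"
    by (auto simp: sat_cnf_def lin_hard_def)
  moreover from \<open>D \<in> H0\<close> have "sat_clause M (lin_clause D) \<longleftrightarrow> sat_clause (M \<circ> OVar) D"
    by (intro sat_lin_clause_iff ballI eval_lin_formula_mon_model[OF sel hard bounds])
      (auto simp: formula_mons_def)
  ultimately show "sat_clause (M \<circ> OVar) D" by simp
qed

lemma soft_cost_lin_soft_model:
  assumes sel: "\<forall>Q\<in>lin_mons H0 S0 sel. sel Q \<in># Q"
    and hard: "sat_cnf M (lin_hard H0 S0 sel B)"
    and bounds: "\<forall>b\<in>B. sat_bound (M \<circ> OVar) b"
  shows "soft_cost (lin_soft S0) M = soft_cost S0 (M \<circ> OVar)"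
  using eval_lin_formula_mon_model[OF sel hard bounds]
  by (intro soft_cost_lin_soft_eq) (force simp: formula_mons_def)

definition optimal_model :: "'v clause set \<Rightarrow> ('v clause \<times> nat) list \<Rightarrow> ('v \<Rightarrow> int) \<Rightarrow> bool" where
  "optimal_model H0 S0 \<alpha> \<longleftrightarrow>
     sat_cnf \<alpha> H0 \<and> (\<forall>\<beta>. sat_cnf \<beta> H0 \<longrightarrow> soft_cost S0 \<alpha> \<le> soft_cost S0 \<beta>)"

definition run_inv :: "'v clause set \<Rightarrow> ('v clause \<times> nat) list \<Rightarrow>
    ('v lvar \<Rightarrow> int) option \<Rightarrow> int option \<Rightarrow> bool" where
  "run_inv H0 S0 bsf msc \<longleftrightarrow>
     (case bsf of
        None \<Rightarrow> msc = None
      | Some M \<Rightarrow> sat_cnf (M \<circ> OVar) H0 \<and> msc = Some (int (soft_cost S0 (M \<circ> OVar)) - 1))"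

lemma solve_run_sound:
  assumes "solve_run H0 S0 sel B bsf msc r"
    and sel: "\<forall>Q\<in>lin_mons H0 S0 sel. sel Q \<in># Q"
    and "finite B" and "run_inv H0 S0 bsf msc"
  shows "(r = RSat N \<longrightarrow> optimal_model H0 S0 (N \<circ> OVar)) \<and>
         (r = RUnsat \<longrightarrow> \<not> (\<exists>\<alpha>. sat_cnf \<alpha> H0))"
  using assms(1,3,4)
proof (induction rule: solve_run.induct)
  case (unsat_none B msc)
  then show ?case
    using sat_cnf_lin_hard_lin_ext by (fastforce simp: run_inv_def oracle_unsat_def within_def)
next
  case (unsat_some B msc M)
  then have model: "sat_cnf (M \<circ> OVar) H0"
    and msc: "msc = Some (int (soft_cost S0 (M \<circ> OVar)) - 1)"
    by (auto simp: run_inv_def)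
  have "soft_cost S0 (M \<circ> OVar) \<le> soft_cost S0 \<alpha>" if "sat_cnf \<alpha> H0" for \<alpha>
  proof -
    from unsat_some.hyps have "\<not> within (soft_cost (lin_soft S0) (lin_ext \<alpha>)) msc"
      using sat_cnf_lin_hard_lin_ext[OF that] by (auto simp: oracle_unsat_def)
    with msc show ?thesis
      by (simp add: within_def soft_cost_lin_soft_lin_ext)
  qed
  with model show ?case
    by (auto simp: optimal_model_def simp del: comp_apply)
next
  case (improve B msc M bsf r)
  \<comment> \<open>\<open>bound_cost\<close> is a \<open>card\<close>, so its vanishing says something only for finite \<open>B\<close>\<close>
  from improve.hyps(2) \<open>finite B\<close> have bounds: "\<forall>b\<in>B. sat_bound (M \<circ> OVar) b"
    by (simp add: lbound_cost_def bound_cost_def)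
  from improve.hyps(1) have hard: "sat_cnf M (lin_hard H0 S0 sel B)"
    by (simp add: oracle_model_def)
  have "run_inv H0 S0 (Some M) (Some (int (soft_cost (lin_soft S0) M) - 1))"
    using sat_cnf_comp_OVar_model[OF sel hard bounds] soft_cost_lin_soft_model[OF sel hard bounds]
    by (simp add: run_inv_def)
  with improve.IH \<open>finite B\<close> show ?case by blast
next
  case (relax_bounds B msc M W bsf r)
  from relax_bounds.hyps(3) \<open>finite B\<close> have "finite W"
    by (blast intro: finite_subset)
  with relax_bounds.IH relax_bounds.prems show ?case by simp
qed simp

theorem theorem4p1:
  fixes H0 :: "'v clause set" and S0 :: "('v clause \<times> nat) list"
  assumes "finite H0"
    and "\<forall>(D, w)\<in>set S0. w > 0"
  shows "(\<forall>M. solve_maxsmt H0 S0 (RSat M) \<longrightarrow>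
            (\<exists>\<alpha>. sat_cnf \<alpha> H0) \<and> sat_cnf (M \<circ> OVar) H0 \<and>
            (\<forall>\<alpha>. sat_cnf \<alpha> H0 \<longrightarrow> soft_cost S0 (M \<circ> OVar) \<le> soft_cost S0 \<alpha>))
       \<and> (solve_maxsmt H0 S0 RUnsat \<longrightarrow> \<not> (\<exists>\<alpha>. sat_cnf \<alpha> H0))"
proof -
  have sound: "(r = RSat M \<longrightarrow> optimal_model H0 S0 (M \<circ> OVar)) \<and>
               (r = RUnsat \<longrightarrow> \<not> (\<exists>\<alpha>. sat_cnf \<alpha> H0))"
    if "solve_maxsmt H0 S0 r" for r M
  proof -
    from that obtain B sel where "finite B" and "sufficient H0 S0 B sel"
      and run: "solve_run H0 S0 sel B None None r"
      by (auto simp: solve_maxsmt_def)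
    then have "\<forall>Q\<in>lin_mons H0 S0 sel. sel Q \<in># Q"
      by (simp add: sufficient_def)
    from solve_run_sound[OF run this \<open>finite B\<close>] show ?thesis
      by (simp add: run_inv_def)
  qed
  show ?thesis
    using sound[of "RSat _"] sound[of RUnsat] by (auto simp: optimal_model_def)
qed

end
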